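(* Let $P$ be a closed subset of $\mathbb{R}^n$ having the origin as an interior point, and let $v\in\mathbb{R}^n$ be such that $\int_P x\cdot v\,d\lambda(x)$ exists and is strictly positive, where $\lambda$ is Lebesgue measure. Then the maximum of $\lambda(Q)$ over (measurable) subsets $Q\subset P$ satisfying $\int_Q v\cdot x\,d\lambda(x)=0$ is attained at $Q=P\cap H$ for a closed half-space $H$ with outward pointing normal $v$. *)

theory Defs
  imports "HOL-Analysis.Analysis"
begin

end

theory Submission
  imports Defs
begin

text \<open>
  Write \<open>f x = x \<bullet> v\<close> and \<open>g c = \<integral>\<^bsub>P \<inter> {f \<le> c}\<^esub> f\<close>. Hyperplanes are
  null sets, so \<open>g\<close> is continuous by dominated convergence; moreover \<open>g 0 \<le> 0\<close> and
  \<open>g c \<rightarrow> \<integral>\<^bsub>P\<^esub> f > 0\<close> as \<open>c \<rightarrow> \<infinity>\<close>, so \<open>g c = 0\<close> for some \<open>c \<ge> 0\<close>.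
  For this \<open>c\<close> and \<open>H = P \<inter> {f \<le> c}\<close>, a competitor \<open>Q\<close> satisfies
  \<open>\<integral>\<^bsub>Q - H\<^esub> f = \<integral>\<^bsub>H - Q\<^esub> f\<close>; since \<open>f > c\<close> on \<open>Q - H\<close> and \<open>f \<le> c\<close> on
  \<open>H - Q\<close>, this forces \<open>\<lambda>(Q - H) \<le> \<lambda>(H - Q)\<close>, i.e. \<open>\<lambda>(Q) \<le> \<lambda>(H)\<close>
  (a bathtub argument).
\<close>

lemma ennreal_integral_le_nn_integral:
  fixes g :: "'a \<Rightarrow> real"
  assumes "integrable M g"
  shows "ennreal (integral\<^sup>L M g) \<le> (\<integral>\<^sup>+x. ennreal (g x) \<partial>M)"
proof -
  have "integral\<^sup>L M g \<le> (\<integral>x. max 0 (g x) \<partial>M)"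
    using assms by (intro integral_mono) auto
  then have "ennreal (integral\<^sup>L M g) \<le> ennreal (\<integral>x. max 0 (g x) \<partial>M)"
    by (rule ennreal_leI)
  also have "\<dots> = (\<integral>\<^sup>+x. ennreal (max 0 (g x)) \<partial>M)"
    using assms by (intro nn_integral_eq_integral[symmetric]) auto
  also have "\<dots> = (\<integral>\<^sup>+x. ennreal (g x) \<partial>M)"
    by (simp add: ennreal_max_0)
  finally show ?thesis .
qed

lemma emeasure_le_of_set_integral_le:
  fixes f :: "'a \<Rightarrow> real"
  assumes "0 \<le> c" and A: "A \<in> sets M" and B: "B \<in> sets M"
    and int_A: "set_integrable M A f" and int_B: "set_integrable M B f"
    and above: "\<And>x. x \<in> A \<Longrightarrow> c < f x" and below: "\<And>x. x \<in> B \<Longrightarrow> f x \<le> c"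
    and le: "(LINT x:A|M. f x) \<le> (LINT x:B|M. f x)"
  shows "emeasure M A \<le> emeasure M B"
proof -
  have A_nonneg: "x \<in> A \<Longrightarrow> 0 \<le> f x" for x
    using above[of x] \<open>0 \<le> c\<close> by linarith
  have lower: "ennreal c * emeasure M A \<le> (\<integral>\<^sup>+x\<in>A. f x \<partial>M)"
    unfolding nn_integral_cmult_indicator[OF A, symmetric]
    by (intro nn_integral_mono) (auto split: split_indicator dest!: above intro!: ennreal_leI)
  have "(\<integral>\<^sup>+x\<in>A. f x \<partial>M) = ennreal (LINT x:A|M. f x)"
    using int_A unfolding set_lebesgue_integral_def set_integrable_def
    by (subst nn_integral_eq_integral[symmetric])
       (auto intro!: nn_integral_cong simp: A_nonneg split: split_indicator)
  also have "\<dots> \<le> ennreal (LINT x:B|M. f x)"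
    using le by (rule ennreal_leI)
  also have "\<dots> \<le> (\<integral>\<^sup>+x\<in>B. f x \<partial>M)"
    using ennreal_integral_le_nn_integral[OF int_B[unfolded set_integrable_def]]
    by (simp add: set_lebesgue_integral_def nn_integral_set_ennreal mult.commute)
  also have "\<dots> \<le> ennreal c * emeasure M B"
    unfolding nn_integral_cmult_indicator[OF B, symmetric]
    by (intro nn_integral_mono) (auto split: split_indicator dest!: below intro!: ennreal_leI)
  finally have upper: "(\<integral>\<^sup>+x\<in>A. f x \<partial>M) \<le> ennreal c * emeasure M B" .
  show ?thesis
  proof (cases "c = 0")
    case True
    \<comment> \<open>Here \<open>c * emeasure M A \<le> c * emeasure M B\<close> is vacuous; instead \<open>f > 0\<close> on \<open>A\<close>
      while \<open>\<integral>\<^sup>+x\<in>A. f x = 0\<close>, so \<open>A\<close> is null.\<close>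
    with upper have "(\<integral>\<^sup>+x. ennreal (f x * indicator A x) \<partial>M) = 0"
      by (simp add: nn_integral_set_ennreal)
    moreover have [measurable]: "(\<lambda>x. f x * indicator A x) \<in> borel_measurable M"
      using int_A by (simp add: set_integrable_def mult.commute)
    ultimately have "AE x in M. ennreal (f x * indicator A x) = 0"
      by (simp add: nn_integral_0_iff_AE)
    then have "AE x in M. x \<notin> A"
      by eventually_elim (use above \<open>c = 0\<close> in \<open>force simp: ennreal_eq_0_iff\<close>)
    then show ?thesis
      using AE_iff_null_sets[OF A] by (simp add: null_setsD1)
  next
    case False
    with \<open>0 \<le> c\<close> show ?thesis
      using order.trans[OF lower upper] by (simp add: ennreal_mult_le_mult_iff)
  qed
qed

lemma emeasure_le_sublevel_of_zero_set_integral: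
  fixes f :: "'a \<Rightarrow> real"
  assumes int: "set_integrable M P f" and "0 \<le> c"
    and H: "P \<inter> {x. f x \<le> c} \<in> sets M" "(LINT x:(P \<inter> {x. f x \<le> c})|M. f x) = 0"
    and Q: "Q \<in> sets M" "Q \<subseteq> P" "(LINT x:Q|M. f x) = 0"
  shows "emeasure M Q \<le> emeasure M (P \<inter> {x. f x \<le> c})"
proof -
  define H where "H = P \<inter> {x. f x \<le> c}"
  have sets: "Q \<inter> H \<in> sets M" "Q - H \<in> sets M" "H - Q \<in> sets M"
    using Q(1) H(1) by (auto simp: H_def)
  have "set_integrable M S f" if "S \<in> sets M" "S \<subseteq> P" for S
    using set_integrable_subset[OF int that] .
  then have ints: "set_integrable M (Q \<inter> H) f" "set_integrable M (Q - H) f"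
      "set_integrable M (H - Q) f"
    using sets Q(2) by (auto simp: H_def)
  have Q_split: "Q = (Q \<inter> H) \<union> (Q - H)" and H_split: "H = (Q \<inter> H) \<union> (H - Q)"
    and disj: "(Q \<inter> H) \<inter> (Q - H) = {}" "(Q \<inter> H) \<inter> (H - Q) = {}"
    by auto
  have "(LINT x:Q|M. f x) = (LINT x:Q \<inter> H|M. f x) + (LINT x:Q - H|M. f x)"
    using set_integral_Un[OF disj(1) ints(1,2)] by (simp flip: Q_split)
  moreover have "(LINT x:H|M. f x) = (LINT x:Q \<inter> H|M. f x) + (LINT x:H - Q|M. f x)"
    using set_integral_Un[OF disj(2) ints(1,3)] by (simp flip: H_split)
  ultimately have "(LINT x:Q - H|M. f x) \<le> (LINT x:H - Q|M. f x)"
    using H(2) Q(3) by (simp add: H_def)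
  then have "emeasure M (Q - H) \<le> emeasure M (H - Q)"
    using \<open>0 \<le> c\<close> sets ints Q(2) by (intro emeasure_le_of_set_integral_le) (auto simp: H_def)
  have "emeasure M Q = emeasure M (Q \<inter> H) + emeasure M (Q - H)"
    using plus_emeasure[OF sets(1,2) disj(1)] by (simp flip: Q_split)
  also have "\<dots> \<le> emeasure M (Q \<inter> H) + emeasure M (H - Q)"
    using \<open>emeasure M (Q - H) \<le> emeasure M (H - Q)\<close> by (rule add_left_mono)
  also have "\<dots> = emeasure M H"
    using plus_emeasure[OF sets(1,3) disj(2)] by (simp flip: H_split)
  finally show ?thesis
    unfolding H_def .
qed

lemma LIMSEQ_set_integral_dominated:
  fixes f :: "'a \<Rightarrow> 'b::{banach, second_countable_topology}"
  assumes int: "set_integrable M P f"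
    and S: "\<And>n. S n \<in> sets M" "\<And>n. S n \<subseteq> P" and T: "T \<in> sets M" "T \<subseteq> P"
    and lim: "AE x in M. (\<lambda>n. indicator (S n) x :: real) \<longlonglongrightarrow> indicator T x"
  shows "(\<lambda>n. LINT x:S n|M. f x) \<longlonglongrightarrow> (LINT x:T|M. f x)"
  unfolding set_lebesgue_integral_def
proof (rule integral_dominated_convergence[where w="\<lambda>x. norm (indicator P x *\<^sub>R f x)"])
  show "(\<lambda>x. indicator T x *\<^sub>R f x) \<in> borel_measurable M"
    using set_integrable_subset[OF int T] by (simp add: set_integrable_def)
  show "(\<lambda>x. indicator (S n) x *\<^sub>R f x) \<in> borel_measurable M" for n
    using set_integrable_subset[OF int S(1,2)] by (simp add: set_integrable_def)
  show "integrable M (\<lambda>x. norm (indicator P x *\<^sub>R f x))"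
    using int unfolding set_integrable_def by (rule integrable_norm)
  show "AE x in M. norm (indicator (S n) x *\<^sub>R f x) \<le> norm (indicator P x *\<^sub>R f x)" for n
    using S(2)[of n] by (auto split: split_indicator)
  show "AE x in M. (\<lambda>n. indicator (S n) x *\<^sub>R f x) \<longlonglongrightarrow> indicator T x *\<^sub>R f x"
    using lim by eventually_elim (intro tendsto_scaleR tendsto_const)
qed

lemma eventually_le_iff_of_tendsto:
  fixes X :: "'i \<Rightarrow> 'a::linorder_topology"
  assumes "(X \<longlongrightarrow> a) F" and "t \<noteq> a"
  shows "eventually (\<lambda>n. t \<le> X n \<longleftrightarrow> t \<le> a) F"
proof (cases "t < a")
  case True
  with order_tendstoD(1)[OF assms(1) True] show ?thesis
    by (auto elim!: eventually_mono)
next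
  case False
  with \<open>t \<noteq> a\<close> have "a < t" by simp
  with order_tendstoD(2)[OF assms(1) \<open>a < t\<close>] show ?thesis
    by (auto elim!: eventually_mono)
qed

lemma sets_Int_sublevel:
  fixes f :: "'a \<Rightarrow> real"
  assumes "P \<in> sets M" and "f \<in> borel_measurable M"
  shows "P \<inter> {x. f x \<le> c} \<in> sets M"
proof -
  have "P \<inter> {x. f x \<le> c} = P \<inter> {x \<in> space M. f x \<le> c}"
    using sets.sets_into_space[OF assms(1)] by blast
  then show ?thesis
    using assms by simp
qed

lemma continuous_on_set_integral_sublevel:
  fixes f :: "'a \<Rightarrow> real"
  assumes int: "set_integrable M P f" and P: "P \<in> sets M" and f: "f \<in> borel_measurable M"
    and null: "\<And>a. {x \<in> space M. f x = a} \<in> null_sets M"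
  shows "continuous_on UNIV (\<lambda>c. LINT x:(P \<inter> {x. f x \<le> c})|M. f x)"
proof (rule continuous_on_sequentiallyI)
  fix X :: "nat \<Rightarrow> real" and a :: real assume X: "X \<longlonglongrightarrow> a"
  have "AE x in M. f x \<noteq> a"
    using AE_not_in[OF null[of a]] by (auto elim!: eventually_mono)
  then have "AE x in M. (\<lambda>n. indicator (P \<inter> {x. f x \<le> X n}) x :: real)
      \<longlonglongrightarrow> indicator (P \<inter> {x. f x \<le> a}) x"
  proof eventually_elim
    case (elim x)
    show ?case
      by (rule tendsto_eventually, use eventually_le_iff_of_tendsto[OF X elim] in
          \<open>auto elim!: eventually_mono split: split_indicator\<close>)
  qed
  then show "(\<lambda>n. LINT x:(P \<inter> {x. f x \<le> X n})|M. f x) \<longlonglongrightarrow> (LINT x:(P \<inter> {x. f x \<le> a})|M. f x)"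
    using P f by (intro LIMSEQ_set_integral_dominated[OF int] sets_Int_sublevel) auto
qed

lemma exists_sublevel_zero_set_integral:
  fixes f :: "'a \<Rightarrow> real"
  assumes int: "set_integrable M P f" and P: "P \<in> sets M" and f: "f \<in> borel_measurable M"
    and null: "\<And>a. {x \<in> space M. f x = a} \<in> null_sets M"
    and pos: "0 < (LINT x:P|M. f x)"
  shows "\<exists>c\<ge>0. (LINT x:(P \<inter> {x. f x \<le> c})|M. f x) = 0"
proof -
  define g where "g c = (LINT x:(P \<inter> {x. f x \<le> c})|M. f x)" for c
  have "g 0 \<le> (LINT x:(P \<inter> {x. f x \<le> 0})|M. 0)"
    unfolding g_def using set_integrable_subset[OF int sets_Int_sublevel[OF P f]]
    by (intro set_integral_mono) (auto simp: set_integrable_def)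
  then have "g 0 \<le> 0"
    by simp
  have "AE x in M. (\<lambda>n. indicator (P \<inter> {x. f x \<le> real n}) x :: real) \<longlonglongrightarrow> indicator P x"
  proof (rule AE_I2)
    fix x
    have "eventually (\<lambda>n. f x \<le> real n) sequentially"
      using filterlim_real_sequentially by (simp add: filterlim_at_top)
    then show "(\<lambda>n. indicator (P \<inter> {x. f x \<le> real n}) x :: real) \<longlonglongrightarrow> indicator P x"
      by (intro tendsto_eventually) (auto elim!: eventually_mono split: split_indicator)
  qed
  then have "(\<lambda>n. g (real n)) \<longlonglongrightarrow> (LINT x:P|M. f x)"
    unfolding g_def using P f by (intro LIMSEQ_set_integral_dominated[OF int] sets_Int_sublevel) auto
  then have "eventually (\<lambda>n. 0 < g (real n)) sequentially"
    using pos by (rule order_tendstoD(1))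
  then obtain N where "0 < g (real N)"
    by (auto simp: eventually_sequentially)
  moreover have "continuous_on {0..real N} g"
    unfolding g_def
    by (rule continuous_on_subset[OF continuous_on_set_integral_sublevel[OF int P f null]]) simp
  ultimately show ?thesis
    using IVT'[of g 0 0 "real N"] \<open>g 0 \<le> 0\<close> unfolding g_def by fastforce
qed

theorem lemma3p6:
  fixes P :: "'a::euclidean_space set" and v :: 'a
  assumes "closed P"
    and "0 \<in> interior P"
    and "set_integrable lebesgue P (\<lambda>x. x \<bullet> v)"
    and "(LINT x:P|lebesgue. x \<bullet> v) > 0"
  shows "\<exists>c::real.
           (LINT x:(P \<inter> {x. x \<bullet> v \<le> c})|lebesgue. x \<bullet> v) = 0 \<and>
           (\<forall>Q. Q \<in> sets lebesgue \<longrightarrow> Q \<subseteq> P \<longrightarrow>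
                (LINT x:Q|lebesgue. x \<bullet> v) = 0 \<longrightarrow>
                emeasure lebesgue Q \<le> emeasure lebesgue (P \<inter> {x. x \<bullet> v \<le> c}))"
proof -
  note int = assms(3) and pos = assms(4)
  have P: "P \<in> sets lebesgue"
    using \<open>closed P\<close> by (simp add: borel_closed)
  have f: "(\<lambda>x. x \<bullet> v) \<in> borel_measurable lebesgue"
    using borel_measurable_inner[OF id_borel_measurable_lebesgue borel_measurable_const]
    by (simp add: id_def)
  have "v \<noteq> 0"
    using pos by auto
  then have null: "{x \<in> space lebesgue. x \<bullet> v = a} \<in> null_sets lebesgue" for a
    using negligible_hyperplane[of v a] by (simp add: negligible_iff_null_sets inner_commute)
  obtain c where "0 \<le> c" and c: "(LINT x:(P \<inter> {x. x \<bullet> v \<le> c})|lebesgue. x \<bullet> v) = 0"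
    using exists_sublevel_zero_set_integral[OF int P f null pos] by blast
  then show ?thesis
    using emeasure_le_sublevel_of_zero_set_integral[OF int \<open>0 \<le> c\<close> sets_Int_sublevel[OF P f] c]
    by blast
qed

end
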